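(* Let $M$ be a singular $n\times n$ matrix with all entries in $\{-1,+1\}$. Then there exist a novel partition $\lambda$ of length at most $n$ and a vector $v\in V^{(n)}_\lambda$ with $vM=0$ (i.e. $v$ is a left null vector of $M$).
   Context: An integer partition is $\lambda=(\lambda_1,\dots,\lambda_k)$ with integers $\lambda_1\ge\dots\ge\lambda_k\ge 1$; $k$ is its length. For $v\in\mathbb{Z}^k$ let $v^{\perp B}=\{x\in\{-1,1\}^k: v\cdot x=0\}$ (the Bernoulli orthogonal complement); for a partition $\lambda$, $\lambda^{\perp B}$ means this set for the vector $(\lambda_1,\dots,\lambda_k)$. $V_\lambda\subset\mathbb{Z}^k$ is the set of vectors obtained from $(\lambda_1,\dots,\lambda_k)$ by permuting the coordinates and changing the signs of some coordinates, subject to the first coordinate being positive. For $n\ge k$, $V_\lambda^{(n)}\subset\mathbb{Z}^n$ is the set of vectors with exactly $k$ nonzero coordinates which, read in increasing order of index, form a vector of $V_\lambda$. For $I\subset\{1,\dots,m\}$, $\mathrm{Proj}_I:\{-1,1\}^m\to\{-1,1\}^{|I|}$ keeps the coordinates indexed by $I$ (in increasing order). Reduction: for partitions $\mu$ of length $m$ and $\lambda$ of length $k\le m$, write $\mu\Rightarrow\lambda$ iff there exist $I\subset\{1,\dots,m\}$ with $|I|=k$ and $v\in V_\lambda$ such that $\mathrm{Proj}_I(\mu^{\perp B})\subset v^{\perp B}$ (when $k=m$ this means $\mu^{\perp B}\subset v^{\perp B}$). Strict reduction: $\mu$ strictly reduces to $\lambda$ iff $\mu\Rightarrow\lambda$ and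 not $\lambda\Rightarrow\mu$. Equivalence: partitions $\lambda,\mu$ of the same length are equivalent iff there is $w\in V_\mu$ with $\lambda^{\perp B}=w^{\perp B}$. A partition $\lambda$ is novel iff $\lambda^{\perp B}\neq\emptyset$, there is no partition $\lambda'$ to which $\lambda$ strictly reduces, and $\lambda$ is lexicographically smallest (comparing $(\lambda_1,\lambda_2,\dots)$) among all partitions equivalent to it. *)

theory Defs
  imports "Jordan_Normal_Form.Determinant" "HOL-Library.Multiset"
begin

definition is_partition :: "int list \<Rightarrow> bool" where
  "is_partition lam \<longleftrightarrow> lam \<noteq> [] \<and> sorted_wrt (\<ge>) lam \<and> (\<forall>x\<in>set lam. x \<ge> 1)"

definition dotl :: "int list \<Rightarrow> int list \<Rightarrow> int" where
  "dotl v x = (\<Sum>i<length v. v ! i * x ! i)"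

definition bperp :: "int list \<Rightarrow> int list set" where
  "bperp v = {x. length x = length v \<and> set x \<subseteq> {-1, 1} \<and> dotl v x = 0}"

definition Vset :: "int list \<Rightarrow> int list set" where
  "Vset lam = {w. length w = length lam \<and>
     (\<exists>p. p permutes {..<length lam} \<and> (\<exists>s. (\<forall>i<length lam. s i \<in> {-1, 1}) \<and>
        (\<forall>i<length lam. w ! i = s i * lam ! p i))) \<and>
     w \<noteq> [] \<and> hd w > 0}"

definition Vsetn :: "nat \<Rightarrow> int list \<Rightarrow> int list set" where
  "Vsetn n lam = {v. length v = n \<and> length (filter (\<lambda>x. x \<noteq> 0) v) = length lam \<and>
     filter (\<lambda>x. x \<noteq> 0) v \<in> Vset lam}"

text \<open>Reduction mu \<Rightarrow> lambda. Proj_I is nths.\<close>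
definition reduces :: "int list \<Rightarrow> int list \<Rightarrow> bool" where
  "reduces mu lam \<longleftrightarrow> length lam \<le> length mu \<and>
     (\<exists>I v. I \<subseteq> {..<length mu} \<and> card I = length lam \<and> v \<in> Vset lam \<and>
        (\<lambda>x. nths x I) ` bperp mu \<subseteq> bperp v)"

definition strictly_reduces :: "int list \<Rightarrow> int list \<Rightarrow> bool" where
  "strictly_reduces mu lam \<longleftrightarrow> reduces mu lam \<and> \<not> reduces lam mu"

definition equivalent :: "int list \<Rightarrow> int list \<Rightarrow> bool" where
  "equivalent lam mu \<longleftrightarrow> length lam = length mu \<and> (\<exists>w\<in>Vset mu. bperp lam = bperp w)"

definition lex_le :: "int list \<Rightarrow> int list \<Rightarrow> bool" where
  "lex_le a b \<longleftrightarrow> a = b \<or> (\<exists>i<min (length a) (length b). take i a = take i b \<and> a ! i < b ! i)"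

definition novel :: "int list \<Rightarrow> bool" where
  "novel lam \<longleftrightarrow> is_partition lam \<and> bperp lam \<noteq> {} \<and>
     \<not> (\<exists>lam'. is_partition lam' \<and> strictly_reduces lam lam') \<and>
     (\<forall>mu. is_partition mu \<and> equivalent lam mu \<longrightarrow> lex_le lam mu)"

end

theory Submission
  imports Defs
begin

(*
  Call a partition lam "realized" by M if some left null vector v of M has the
  parts of lam, as a multiset, as the absolute values of its nonzero entries.  A singular
  +-1 matrix has a nonzero left null vector, so some partition of length <= n is realized.

  Two facts about realized partitions drive the argument:
  (1) Realizability is inherited along reductions: if lam is realized and reduces to lam',
      then lam' is realized.  Each column c of M, sign-corrected on the support of v, lies
      in the Bernoulli complement of lam; projecting it and pairing with the vector w of
      the reduction shows that a new vector, supported where the projection keeps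
      coordinates, is again orthogonal to every column.
  (2) A realized partition has nonempty Bernoulli complement (take any column of M).

  Among the realized partitions of length <= n choose an "optimal" one: of least length,
  then with largest Bernoulli complement, then lexicographically least.  A purely
  combinatorial argument shows that an optimal element of any reduction-closed set of
  partitions is novel, provided its complement is nonempty: a reduction from it cannot
  shorten it and, by maximality of the complement, is an equality of complements and hence
  reversible; equivalent partitions are reductions with complements of the same size.
  Finally a null vector realizing lam, negated if necessary, lies in V_lam^(n).
*)

section \<open>Signed permutations of integer lists\<close>

definition signed_perm :: "(nat \<Rightarrow> nat) \<Rightarrow> (nat \<Rightarrow> int) \<Rightarrow> int list \<Rightarrow> int list" where
  "signed_perm p s x = map (\<lambda>i. s i * x ! (p i)) [0..<length x]"

definition signs :: "nat \<Rightarrow> (nat \<Rightarrow> int) \<Rightarrow> bool" where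
  "signs k s \<longleftrightarrow> (\<forall>i<k. s i \<in> {-1, 1})"

lemma length_signed_perm [simp]: "length (signed_perm p s x) = length x"
  by (simp add: signed_perm_def)

lemma nth_signed_perm [simp]: "i < length x \<Longrightarrow> signed_perm p s x ! i = s i * x ! (p i)"
  by (simp add: signed_perm_def)

lemma signs_square: "signs k s \<Longrightarrow> i < k \<Longrightarrow> s i * s i = 1"
  unfolding signs_def by auto

lemma dotl_signed_perm:
  assumes p: "p permutes {..<k}" and s: "signs k s" and a: "length a = k" and x: "length x = k"
  shows "dotl (signed_perm p s a) (signed_perm p s x) = dotl a x"
proof -
  have "dotl (signed_perm p s a) (signed_perm p s x) = (\<Sum>i<k. (s i * s i) * (a ! p i * x ! p i))"
    unfolding dotl_def using a x by (intro sum.cong) (auto simp: algebra_simps)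
  also have "\<dots> = (\<Sum>i<k. a ! p i * x ! p i)"
    using signs_square[OF s] by (intro sum.cong) auto
  also have "\<dots> = (\<Sum>i<k. a ! i * x ! i)"
    using sum.permute[OF p, of "\<lambda>i. a ! i * x ! i"] by (simp add: comp_def)
  finally show ?thesis unfolding dotl_def using a by simp
qed

lemma signed_perm_pm1:
  assumes p: "p permutes {..<k}" and s: "signs k s" and x: "length x = k" "set x \<subseteq> {-1, 1}"
  shows "set (signed_perm p s x) \<subseteq> {-1, 1}"
proof
  fix y assume "y \<in> set (signed_perm p s x)"
  then obtain i where i: "i < k" and y: "y = s i * x ! p i"
    using x by (auto simp: in_set_conv_nth)
  have "p i < length x" using permutes_in_image[OF p] i x by auto
  then have "x ! p i \<in> {-1, 1}" using x(2) nth_mem by blast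
  then show "y \<in> {-1, 1}" using s i y unfolding signs_def by auto
qed

definition signed_perm_inv :: "(nat \<Rightarrow> nat) \<Rightarrow> (nat \<Rightarrow> int) \<Rightarrow> int list \<Rightarrow> int list" where
  "signed_perm_inv p s = signed_perm (inv_into UNIV p) (s \<circ> inv_into UNIV p)"

lemma signs_inv:
  assumes p: "p permutes {..<k}" and s: "signs k s" shows "signs k (s \<circ> inv_into UNIV p)"
  using s permutes_in_image[OF permutes_inv[OF p]] unfolding signs_def by auto

lemma signed_perm_inverse:
  assumes p: "p permutes {..<k}" and s: "signs k s" and x: "length x = k"
  shows "signed_perm p s (signed_perm_inv p s x) = x"
    and "signed_perm_inv p s (signed_perm p s x) = x"
proof -
  show "signed_perm p s (signed_perm_inv p s x) = x"
  proof (rule nth_equalityI)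
    fix i assume "i < length (signed_perm p s (signed_perm_inv p s x))"
    then have i: "i < k" using x by (simp add: signed_perm_inv_def)
    have "p i < k" using permutes_in_image[OF p] i by auto
    moreover have "inv_into UNIV p (p i) = i" using permutes_inverses(2)[OF p] by auto
    ultimately show "signed_perm p s (signed_perm_inv p s x) ! i = x ! i"
      using i x signs_square[OF s i] by (simp add: signed_perm_inv_def mult.assoc[symmetric])
  qed (simp add: signed_perm_inv_def)
  show "signed_perm_inv p s (signed_perm p s x) = x"
  proof (rule nth_equalityI)
    fix i assume "i < length (signed_perm_inv p s (signed_perm p s x))"
    then have i: "i < k" using x by (simp add: signed_perm_inv_def)
    have pi: "inv_into UNIV p i < k" using permutes_in_image[OF permutes_inv[OF p]] i by auto
    moreover have "p (inv_into UNIV p i) = i" using permutes_inverses(1)[OF p] by auto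
    ultimately show "signed_perm_inv p s (signed_perm p s x) ! i = x ! i"
      using i x signs_square[OF s pi] by (simp add: signed_perm_inv_def mult.assoc[symmetric])
  qed (simp add: signed_perm_inv_def)
qed

lemma bperp_signed_perm:
  assumes p: "p permutes {..<k}" and s: "signs k s" and a: "length a = k"
  shows "bperp (signed_perm p s a) = signed_perm p s ` bperp a"
proof
  show "signed_perm p s ` bperp a \<subseteq> bperp (signed_perm p s a)"
    using signed_perm_pm1[OF p s] dotl_signed_perm[OF p s a] a by (auto simp: bperp_def)
next
  show "bperp (signed_perm p s a) \<subseteq> signed_perm p s ` bperp a"
  proof
    fix y assume y: "y \<in> bperp (signed_perm p s a)"
    then have ylen: "length y = k" and ypm: "set y \<subseteq> {-1, 1}" using a by (auto simp: bperp_def)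
    let ?x = "signed_perm_inv p s y"
    have xlen: "length ?x = k" using ylen by (simp add: signed_perm_inv_def)
    have "set ?x \<subseteq> {-1, 1}" unfolding signed_perm_inv_def
      by (rule signed_perm_pm1[OF permutes_inv[OF p] signs_inv[OF p s] ylen ypm])
    moreover have "dotl a ?x = dotl (signed_perm p s a) y"
      using dotl_signed_perm[OF p s a xlen] signed_perm_inverse(1)[OF p s ylen] by simp
    ultimately have "?x \<in> bperp a" using y xlen a by (simp add: bperp_def)
    then show "y \<in> signed_perm p s ` bperp a"
      using signed_perm_inverse(1)[OF p s ylen] by (metis image_eqI)
  qed
qed

lemma card_bperp_signed_perm:
  assumes p: "p permutes {..<k}" and s: "signs k s" and a: "length a = k"
  shows "card (bperp (signed_perm p s a)) = card (bperp a)"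
proof -
  have "inj_on (signed_perm p s) (bperp a)"
    by (rule inj_on_inverseI[where g = "signed_perm_inv p s"])
       (use signed_perm_inverse(2)[OF p s] a in \<open>auto simp: bperp_def\<close>)
  then show ?thesis using bperp_signed_perm[OF assms] by (simp add: card_image)
qed

lemma Vset_signed_perm:
  assumes "w \<in> Vset lam"
  obtains p s where "p permutes {..<length lam}" "signs (length lam) s" "w = signed_perm p s lam"
proof -
  from assms obtain p s where p: "p permutes {..<length lam}" and s: "\<forall>i<length lam. s i \<in> {-1, 1}"
    and w: "\<forall>i<length lam. w ! i = s i * lam ! p i" and l: "length w = length lam"
    unfolding Vset_def by blast
  have "w = signed_perm p s lam" by (rule nth_equalityI) (use w l in auto)
  then show ?thesis using that p s unfolding signs_def by blast
qed

lemma card_bperp_Vset: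
  assumes "w \<in> Vset lam" shows "card (bperp w) = card (bperp lam)"
proof -
  obtain p s where "p permutes {..<length lam}" "signs (length lam) s" "w = signed_perm p s lam"
    using Vset_signed_perm[OF assms] .
  then show ?thesis using card_bperp_signed_perm by blast
qed

lemma bperp_uminus: "bperp (map uminus a) = bperp a"
proof -
  have "dotl (map uminus a) x = - dotl a x" for x
    unfolding dotl_def by (simp add: sum_negf)
  then show ?thesis unfolding bperp_def by auto
qed

text \<open>Any signed permutation of a list with nonzero entries has the same Bernoulli
  complement as a member of Vset: if its first entry is negative, flip all signs.\<close>
lemma Vset_member_of_signed_perm:
  assumes p: "p permutes {..<length lam}" and s: "signs (length lam) s" and ne: "lam \<noteq> []"
    and nz: "\<forall>x\<in>set lam. x \<noteq> 0"
  shows "\<exists>u\<in>Vset lam. bperp u = bperp (signed_perm p s lam)"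
proof -
  have l0: "0 < length lam" using ne by auto
  have sp_ne: "signed_perm p t lam \<noteq> []" for t
    by (metis ne length_signed_perm length_greater_0_conv)
  have hd_eq: "hd (signed_perm p t lam) = t 0 * lam ! p 0" for t
    using l0 sp_ne[of t] by (simp add: hd_conv_nth)
  have in_Vset: "signed_perm p t lam \<in> Vset lam" if t: "signs (length lam) t" and pos: "t 0 * lam ! p 0 > 0" for t
  proof -
    have "\<exists>q. q permutes {..<length lam} \<and> (\<exists>r. (\<forall>i<length lam. r i \<in> {-1, 1}) \<and>
        (\<forall>i<length lam. signed_perm p t lam ! i = r i * lam ! q i))"
      using p t unfolding signs_def by auto
    moreover have "hd (signed_perm p t lam) > 0" using pos hd_eq by simp
    ultimately show ?thesis unfolding Vset_def using sp_ne[of t] by simp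
  qed
  have "lam ! p 0 \<noteq> 0" using nz permutes_in_image[OF p] l0 by auto
  moreover have "s 0 \<in> {-1, 1}" using s l0 unfolding signs_def by auto
  ultimately have "s 0 * lam ! p 0 \<noteq> 0" by auto
  then consider "s 0 * lam ! p 0 > 0" | "- s 0 * lam ! p 0 > 0"
    by (cases "s 0 * lam ! p 0 > 0") auto
  then show ?thesis
  proof cases
    case 1 then show ?thesis using in_Vset[OF s] by blast
  next
    case 2
    have "signs (length lam) (\<lambda>i. - s i)" using s unfolding signs_def by auto
    then have "signed_perm p (\<lambda>i. - s i) lam \<in> Vset lam" using in_Vset 2 by simp
    moreover have "signed_perm p (\<lambda>i. - s i) lam = map uminus (signed_perm p s lam)"
      by (rule nth_equalityI) auto
    ultimately show ?thesis using bperp_uminus by (intro bexI[of _ "signed_perm p (\<lambda>i. - s i) lam"]) auto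
  qed
qed

lemma Vset_mset:
  assumes w: "w \<in> Vset lam" and pos: "\<forall>x\<in>set lam. x \<ge> 1"
  shows "mset (map abs w) = mset lam"
proof -
  obtain p s where p: "p permutes {..<length lam}" and s: "signs (length lam) s"
    and wt: "w = signed_perm p s lam"
    using Vset_signed_perm[OF w] by blast
  have "map abs w = permute_list p lam"
  proof (rule nth_equalityI)
    fix i assume "i < length (map abs w)"
    then have i: "i < length lam" using wt by simp
    then have "lam ! p i \<ge> 1" using pos permutes_in_image[OF p] by auto
    moreover have "s i \<in> {-1,1}" using s i unfolding signs_def by auto
    ultimately show "map abs w ! i = permute_list p lam ! i"
      using i wt permute_list_nth[OF p i] by (auto simp: abs_mult)
  qed (simp add: wt)
  then show ?thesis using p by simp
qed

lemma Vset_of_mset: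
  assumes m: "mset (map abs w) = mset lam" and pos: "\<forall>x\<in>set lam. x \<ge> 1"
    and ne: "w \<noteq> []" and h: "hd w > 0"
  shows "w \<in> Vset lam"
proof -
  obtain p where p: "p permutes {..<length lam}" and pl: "permute_list p lam = map abs w"
    using mset_eq_permutation[OF m] by blast
  have len: "length w = length lam" using mset_eq_length[OF m] by simp
  have "\<forall>i<length lam. sgn (w ! i) \<in> {-1, 1} \<and> w ! i = sgn (w ! i) * lam ! p i"
  proof (intro allI impI)
    fix i assume i: "i < length lam"
    have "lam ! p i = \<bar>w ! i\<bar>" using permute_list_nth[OF p i] pl i len by (metis nth_map)
    moreover have "lam ! p i \<ge> 1" using pos permutes_in_image[OF p] i by auto
    ultimately show "sgn (w ! i) \<in> {-1, 1} \<and> w ! i = sgn (w ! i) * lam ! p i"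
      by (auto simp: sgn_if abs_if)
  qed
  then show ?thesis unfolding Vset_def using len ne h p
    by (auto intro!: exI[of _ p] exI[of _ "\<lambda>i. sgn (w ! i)"])
qed

text \<open>Complements are finite, of size at most 2^k; this bounds the maximisation below.\<close>
lemma finite_card_bperp: "finite (bperp x) \<and> card (bperp x) \<le> 2 ^ length x"
proof -
  let ?C = "{xs. set xs \<subseteq> {-1, 1::int} \<and> length xs = length x}"
  have sub: "bperp x \<subseteq> ?C" unfolding bperp_def by auto
  have "finite ?C" by (rule finite_lists_length_eq) simp
  moreover have "card ?C = 2 ^ length x" by (simp add: card_lists_length_eq numeral_2_eq_2)
  ultimately show ?thesis using card_mono[of ?C] finite_subset[OF sub] sub by auto
qed

section \<open>Reductions between partitions of equal length\<close>

text \<open>Between lists of the same length a reduction must keep all coordinates, so it just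
  says that the Bernoulli complement of mu lies in that of some member of Vset lam.\<close>
lemma reduces_same_length:
  assumes len: "length lam = length mu"
  shows "reduces mu lam \<longleftrightarrow> (\<exists>w\<in>Vset lam. bperp mu \<subseteq> bperp w)"
proof -
  have "(\<lambda>x. nths x {..<length mu}) ` bperp mu = (\<lambda>x. x) ` bperp mu"
    by (rule image_cong) (auto simp: bperp_def)
  then have full: "(\<lambda>x. nths x {..<length mu}) ` bperp mu = bperp mu" by simp
  show ?thesis
  proof
    assume "reduces mu lam"
    then obtain I w where I: "I \<subseteq> {..<length mu}" "card I = length lam" and w: "w \<in> Vset lam"
      and img: "(\<lambda>x. nths x I) ` bperp mu \<subseteq> bperp w"
      unfolding reduces_def by blast
    have "I = {..<length mu}" using card_subset_eq[of "{..<length mu}" I] I len by simp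
    then show "\<exists>w\<in>Vset lam. bperp mu \<subseteq> bperp w" using w img full by auto
  next
    assume "\<exists>w\<in>Vset lam. bperp mu \<subseteq> bperp w"
    then show "reduces mu lam"
      unfolding reduces_def using len full by (intro conjI exI[of _ "{..<length mu}"]) auto
  qed
qed

text \<open>Equivalence is symmetric: if bperp mu = bperp w for some w in Vset lam, then
  conversely bperp lam = bperp u for some u in Vset mu (undo the signed permutation).\<close>
lemma Vset_bperp_swap:
  assumes w: "w \<in> Vset lam" and eq: "bperp mu = bperp w" and len: "length mu = length lam"
    and mu: "is_partition mu"
  shows "\<exists>u\<in>Vset mu. bperp u = bperp lam"
proof -
  obtain p s where p: "p permutes {..<length lam}" and s: "signs (length lam) s"
    and wt: "w = signed_perm p s lam"
    using Vset_signed_perm[OF w] .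
  have p': "p permutes {..<length mu}" and s': "signs (length mu) s" using p s len by auto
  have "bperp mu = signed_perm p s ` bperp lam" using eq wt bperp_signed_perm[OF p s] by simp
  then have "signed_perm_inv p s ` bperp mu = bperp lam"
    using signed_perm_inverse(2)[OF p s] by (force simp: image_image bperp_def)
  moreover have "signed_perm_inv p s ` bperp mu = bperp (signed_perm_inv p s mu)"
    unfolding signed_perm_inv_def
    using bperp_signed_perm[OF permutes_inv[OF p'] signs_inv[OF p' s']] by simp
  moreover have "\<exists>u\<in>Vset mu. bperp u = bperp (signed_perm_inv p s mu)"
    unfolding signed_perm_inv_def using mu unfolding is_partition_def
    by (intro Vset_member_of_signed_perm[OF permutes_inv[OF p'] signs_inv[OF p' s']]) auto
  ultimately show ?thesis by simp
qed

section \<open>Optimal partitions are novel\<close>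

definition optimal :: "int list set \<Rightarrow> int list \<Rightarrow> bool" where
  "optimal R lam \<longleftrightarrow> lam \<in> R \<and>
     (\<forall>mu\<in>R. length lam \<le> length mu) \<and>
     (\<forall>mu\<in>R. length mu = length lam \<longrightarrow> card (bperp mu) \<le> card (bperp lam)) \<and>
     (\<forall>mu\<in>R. length mu = length lam \<and> card (bperp mu) = card (bperp lam) \<longrightarrow> lex_le lam mu)"

lemma lex_le_refl: "lex_le a a"
  unfolding lex_le_def by simp

lemma lex_le_Cons: "lex_le t t' \<Longrightarrow> lex_le (h # t) (h # t')"
  unfolding lex_le_def
proof (elim disjE exE conjE)
  fix i assume "i < min (length t) (length t')" "take i t = take i t'" "t ! i < t' ! i"
  then show "h # t = h # t' \<or> (\<exists>i<min (length (h # t)) (length (h # t')).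
      take i (h # t) = take i (h # t') \<and> (h # t) ! i < (h # t') ! i)"
    by (intro disjI2 exI[of _ "Suc i"]) auto
qed simp

lemma lex_le_hd: "h < h' \<Longrightarrow> lex_le (h # t) (h' # t')"
  unfolding lex_le_def by (intro disjI2 exI[of _ 0]) auto

text \<open>A nonempty set of lists of a fixed length with entries at least 1 has a
  lexicographically least element: minimise the head, then recurse on the tails.\<close>
lemma lex_minimal_exists:
  "A \<noteq> {} \<Longrightarrow> \<forall>a\<in>A. length a = k \<and> (\<forall>x\<in>set a. x \<ge> (1::int)) \<Longrightarrow> \<exists>a\<in>A. \<forall>b\<in>A. lex_le a b"
proof (induction k arbitrary: A)
  case 0
  then obtain a where "a \<in> A" by auto
  moreover have "\<forall>b\<in>A. b = a" using 0(2) \<open>a \<in> A\<close> by (metis length_0_conv)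
  ultimately show ?case using lex_le_refl by metis
next
  case (Suc k)
  have hd_nat: "hd a = int (nat (hd a))" if "a \<in> A" for a
  proof -
    have "a \<noteq> []" using Suc.prems that by auto
    then have "hd a \<ge> 1" using Suc.prems that hd_in_set by blast
    then show ?thesis by simp
  qed
  obtain a0 where "a0 \<in> A" using Suc.prems by auto
  then obtain a1 where a1: "a1 \<in> A" and a1min: "\<forall>b\<in>A. nat (hd a1) \<le> nat (hd b)"
    using ex_has_least_nat[of "\<lambda>a. a \<in> A" a0 "\<lambda>a. nat (hd a)"] by blast
  let ?m = "hd a1"
  have hd_min: "?m \<le> hd b" if "b \<in> A" for b
    using a1min hd_nat[OF a1] hd_nat[OF that] that by (metis of_nat_le_iff)
  define A' where "A' = tl ` {a \<in> A. hd a = ?m}"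
  have "A' \<noteq> {}" using a1 unfolding A'_def by auto
  moreover have "\<forall>a\<in>A'. length a = k \<and> (\<forall>x\<in>set a. x \<ge> 1)"
  proof
    fix a assume "a \<in> A'"
    then obtain b where b: "b \<in> A" "a = tl b" unfolding A'_def by auto
    then have "b \<noteq> []" using Suc.prems by auto
    then have "set a \<subseteq> set b" using b by (cases b) auto
    then show "length a = k \<and> (\<forall>x\<in>set a. x \<ge> 1)" using Suc.prems b by auto
  qed
  ultimately obtain t where t: "t \<in> A'" and tmin: "\<forall>b\<in>A'. lex_le t b"
    using Suc.IH by blast
  obtain a2 where a2: "a2 \<in> A" "hd a2 = ?m" "t = tl a2" using t unfolding A'_def by auto
  have "a2 \<noteq> []" using Suc.prems a2 by auto
  then have a2e: "a2 = ?m # t" using a2 by (cases a2) auto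
  show ?case
  proof (intro bexI[OF _ a2(1)] ballI)
    fix b assume b: "b \<in> A"
    then have "b \<noteq> []" using Suc.prems by auto
    then obtain h t' where be: "b = h # t'" by (cases b) auto
    have "?m \<le> h" using hd_min[OF b] be by simp
    then consider "?m < h" | "h = ?m" by linarith
    then show "lex_le a2 b"
    proof cases
      case 1 then show ?thesis using a2e be lex_le_hd by simp
    next
      case 2
      then have "t' \<in> A'" unfolding A'_def using b be by force
      then show ?thesis using tmin a2e be 2 lex_le_Cons by simp
    qed
  qed
qed

text \<open>Every nonempty set of partitions has an optimal element: minimise the length, then
  maximise the complement among the shortest, then take the lexicographic minimum.\<close>
lemma optimal_exists:
  assumes "lam0 \<in> R" and part: "\<forall>lam\<in>R. is_partition lam"
  obtains lam where "optimal R lam"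
proof -
  obtain a where a: "a \<in> R" and amin: "\<forall>mu\<in>R. length a \<le> length mu"
    using ex_has_least_nat[of "\<lambda>x. x \<in> R" lam0 length] assms(1) by blast
  define R1 where "R1 = {mu \<in> R. length mu = length a}"
  have bound: "card (bperp mu) \<le> 2 ^ length a" if "mu \<in> R1" for mu
    using that finite_card_bperp[of mu] unfolding R1_def by auto
  obtain b where b: "b \<in> R1"
    and bmin: "\<forall>mu\<in>R1. 2 ^ length a - card (bperp b) \<le> 2 ^ length a - card (bperp mu)"
    using ex_has_least_nat[of "\<lambda>x. x \<in> R1" a "\<lambda>mu. 2 ^ length a - card (bperp mu)"] a
    unfolding R1_def by blast
  have bmax: "card (bperp mu) \<le> card (bperp b)" if "mu \<in> R1" for mu
    using bmin bound[OF that] bound[OF b] that by fastforce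
  define R2 where "R2 = {mu \<in> R1. card (bperp mu) = card (bperp b)}"
  have "R2 \<noteq> {}" using b unfolding R2_def by auto
  moreover have "\<forall>mu\<in>R2. length mu = length a \<and> (\<forall>x\<in>set mu. x \<ge> 1)"
    using part unfolding R2_def R1_def is_partition_def by auto
  ultimately obtain lam where lam: "lam \<in> R2" and lmin: "\<forall>mu\<in>R2. lex_le lam mu"
    using lex_minimal_exists by blast
  have "optimal R lam"
    unfolding optimal_def using lam lmin amin bmax unfolding R2_def R1_def by auto
  then show ?thesis using that by blast
qed

definition reduction_closed :: "int list set \<Rightarrow> bool" where
  "reduction_closed R \<longleftrightarrow> (\<forall>mu\<in>R. \<forall>mu'. is_partition mu' \<and> reduces mu mu' \<longrightarrow> mu' \<in> R)"

text \<open>In a set of partitions closed under reduction, an optimal element admits no strict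
  reduction: a reduction to lam' cannot shorten lam, and since the complement of lam is
  already largest possible the reduction is an equality of complements, hence reversible.\<close>
lemma optimal_no_strict_reduction:
  assumes closed: "reduction_closed R"
    and part: "\<forall>mu\<in>R. is_partition mu" and opt: "optimal R lam"
    and lam': "is_partition lam'" and red: "reduces lam lam'"
  shows "reduces lam' lam"
proof -
  have lam: "lam \<in> R" using opt unfolding optimal_def by blast
  have lam'R: "lam' \<in> R" using closed lam lam' red unfolding reduction_closed_def by blast
  have len: "length lam' = length lam"
    using red opt lam'R unfolding reduces_def optimal_def by (simp add: le_antisym)
  obtain w where w: "w \<in> Vset lam'" and sub: "bperp lam \<subseteq> bperp w"
    using red reduces_same_length[OF len] by blast
  have "card (bperp w) \<le> card (bperp lam)"
    using card_bperp_Vset[OF w] opt lam'R len unfolding optimal_def by auto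
  then have "bperp lam = bperp w"
    using card_subset_eq[OF _ sub] card_mono[OF _ sub] finite_card_bperp[of w] by auto
  then obtain u where "u \<in> Vset lam" "bperp u = bperp lam'"
    using Vset_bperp_swap[OF w _ len[symmetric]] part lam by blast
  then show ?thesis using reduces_same_length[OF len[symmetric]] by auto
qed

text \<open>An optimal element of a reduction-closed set is least among its equivalents:
  an equivalent partition is a reduction of it with a complement of the same size.\<close>
lemma optimal_lex_minimal:
  assumes closed: "reduction_closed R"
    and opt: "optimal R lam" and mu: "is_partition mu" and eqv: "equivalent lam mu"
  shows "lex_le lam mu"
proof -
  obtain w where w: "w \<in> Vset mu" and bw: "bperp lam = bperp w" and len: "length lam = length mu"
    using eqv unfolding equivalent_def by blast
  have "reduces lam mu" using reduces_same_length[OF len[symmetric]] w bw by auto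
  then have "mu \<in> R" using closed mu opt unfolding optimal_def reduction_closed_def by blast
  moreover have "card (bperp mu) = card (bperp lam)" using card_bperp_Vset[OF w] bw by simp
  ultimately show ?thesis using opt len unfolding optimal_def by auto
qed

lemma optimal_novel:
  assumes closed: "reduction_closed R"
    and part: "\<forall>mu\<in>R. is_partition mu" and opt: "optimal R lam" and ne: "bperp lam \<noteq> {}"
  shows "novel lam"
proof -
  have "is_partition lam" using part opt unfolding optimal_def by blast
  moreover have "reduces lam' lam" if "is_partition lam'" "reduces lam lam'" for lam'
    using optimal_no_strict_reduction[OF closed part opt that] .
  moreover have "lex_le lam mu" if "is_partition mu" "equivalent lam mu" for mu
    using optimal_lex_minimal[OF closed opt that] .
  ultimately show ?thesis unfolding novel_def strictly_reduces_def using ne by blast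
qed

section \<open>Left null vectors and realized partitions\<close>

definition nullv :: "int mat \<Rightarrow> nat \<Rightarrow> int list \<Rightarrow> bool" where
  "nullv M n v \<longleftrightarrow> length v = n \<and> (\<forall>j<n. (\<Sum>i<n. v ! i * M $$ (i, j)) = 0)"

lemma nullv_iff:
  assumes M: "M \<in> carrier_mat n n" and l: "length v = n"
  shows "transpose_mat M *\<^sub>v vec_of_list v = 0\<^sub>v n \<longleftrightarrow> nullv M n v"
proof -
  have "(transpose_mat M *\<^sub>v vec_of_list v) $ j = (\<Sum>i<n. v ! i * M $$ (i, j))" if j: "j < n" for j
  proof -
    have "(transpose_mat M *\<^sub>v vec_of_list v) $ j = row (transpose_mat M) j \<bullet> vec_of_list v"
      using M j by simp
    also have "\<dots> = (\<Sum>i<n. M $$ (i, j) * v ! i)"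
      using M j l by (simp add: scalar_prod_def atLeast0LessThan vec_of_list_index)
    finally show ?thesis by (simp add: mult.commute)
  qed
  then show ?thesis using M l unfolding nullv_def by (auto simp: vec_eq_iff)
qed

lemma null_vector_exists:
  assumes M: "M \<in> carrier_mat n n" and d: "det M = 0"
  obtains v i where "nullv M n v" "i < n" "v ! i \<noteq> 0"
proof -
  have Mt: "transpose_mat M \<in> carrier_mat n n" using M by simp
  have "det (transpose_mat M) = 0" using d det_transpose[OF M] by simp
  then obtain u where u: "u \<in> carrier_vec n" "u \<noteq> 0\<^sub>v n" "transpose_mat M *\<^sub>v u = 0\<^sub>v n"
    using det_0_iff_vec_prod_zero[OF Mt] by blast
  have l: "length (list_of_vec u) = n" using u by simp
  have "vec_of_list (list_of_vec u) = u" by (rule vec_list)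
  then have "nullv M n (list_of_vec u)" using nullv_iff[OF M l] u by simp
  moreover obtain i where "i < n" "u $ i \<noteq> 0" using u by (metis eq_vecI carrier_vecD index_zero_vec)
  ultimately show ?thesis using that u by simp
qed

definition realized :: "int mat \<Rightarrow> nat \<Rightarrow> int list \<Rightarrow> bool" where
  "realized M n lam \<longleftrightarrow>
     (\<exists>v. nullv M n v \<and> mset (filter (\<lambda>x. x \<noteq> 0) (map abs v)) = mset lam)"

text \<open>A nonzero null vector realizes a partition: sort the absolute values of its
  nonzero entries decreasingly.\<close>
lemma realized_of_null:
  assumes nv: "nullv M n v" and i: "i < n" "v ! i \<noteq> 0"
  shows "\<exists>lam. is_partition lam \<and> length lam \<le> n \<and> realized M n lam"
proof -
  define xs where "xs = filter (\<lambda>x. x \<noteq> 0) (map abs v)"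
  define lam where "lam = rev (sort xs)"
  have lv: "length v = n" using nv unfolding nullv_def by simp
  have m: "mset lam = mset xs" unfolding lam_def by simp
  then have s: "set lam = set xs" by (metis set_mset_mset)
  have "\<bar>v ! i\<bar> \<in> set xs" using i lv unfolding xs_def by auto
  then have "lam \<noteq> []" using s by auto
  moreover have "sorted_wrt (\<ge>) lam" unfolding lam_def by (simp add: sorted_wrt_rev)
  moreover have "\<forall>x\<in>set lam. x \<ge> 1" using s unfolding xs_def by auto
  moreover have "length lam \<le> n" using m lv unfolding xs_def
    by (metis length_filter_le length_map mset_eq_length)
  moreover have "realized M n lam" unfolding realized_def xs_def using nv m xs_def by auto
  ultimately show ?thesis unfolding is_partition_def by blast
qed

lemma support_embedding:
  fixes v lam :: "int list"
  assumes l: "length v = n" and m: "mset (filter (\<lambda>x. x \<noteq> 0) (map abs v)) = mset lam"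
  obtains e where "inj_on e {..<length lam}" "e ` {..<length lam} \<subseteq> {..<n}"
    "\<forall>b<length lam. v ! (e b) \<noteq> 0 \<and> lam ! b = \<bar>v ! (e b)\<bar>"
    "\<forall>i<n. v ! i \<noteq> 0 \<longrightarrow> i \<in> e ` {..<length lam}"
proof -
  let ?Ls = "filter (\<lambda>i. v ! i \<noteq> 0) [0..<n]"
  let ?f = "\<lambda>i. \<bar>v ! i\<bar>"
  have "map abs v = map ?f [0..<n]" using l by (rule_tac nth_equalityI) auto
  moreover have "((\<lambda>x. x \<noteq> 0) \<circ> ?f) = (\<lambda>i. v ! i \<noteq> 0)" by (auto simp: fun_eq_iff)
  ultimately have "filter (\<lambda>x. x \<noteq> 0) (map abs v) = map ?f ?Ls" by (simp only: filter_map)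
  then have "mset lam = mset (map ?f ?Ls)" using m by simp
  then obtain p where p: "p permutes {..<length (map ?f ?Ls)}"
    and pl: "permute_list p (map ?f ?Ls) = lam"
    using mset_eq_permutation by blast
  let ?k = "length lam"
  have kl: "?k = length ?Ls" using pl by (metis length_map length_permute_list)
  have p': "p permutes {..<?k}" using p kl by simp
  have pb: "p b < ?k" if "b < ?k" for b using permutes_in_image[OF p'] that by auto
  define e where "e b = ?Ls ! (p b)" for b
  have inj: "inj_on e {..<?k}"
  proof (rule inj_onI)
    fix a b assume "a \<in> {..<?k}" "b \<in> {..<?k}" "e a = e b"
    then have "p a = p b" using pb kl unfolding e_def by (simp add: nth_eq_iff_index_eq)
    then show "a = b" using permutes_inj[OF p'] by (simp add: inj_eq)
  qed
  have inset: "e b \<in> set ?Ls" if "b < ?k" for b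
  proof -
    have "p b < length ?Ls" using pb[OF that] kl by simp
    then show ?thesis unfolding e_def by (rule nth_mem)
  qed
  have match: "\<forall>b<?k. v ! (e b) \<noteq> 0 \<and> lam ! b = \<bar>v ! (e b)\<bar>"
  proof (intro allI impI conjI)
    fix b assume b: "b < ?k"
    show "v ! (e b) \<noteq> 0" using inset[OF b] by auto
    have "lam ! b = map ?f ?Ls ! (p b)" using pl permute_list_nth[OF p] b kl by auto
    then show "lam ! b = \<bar>v ! (e b)\<bar>" using pb[OF b] kl unfolding e_def by simp
  qed
  have cover: "\<forall>i<n. v ! i \<noteq> 0 \<longrightarrow> i \<in> e ` {..<?k}"
  proof (intro allI impI)
    fix i assume "i < n" "v ! i \<noteq> 0"
    then have "i \<in> set ?Ls" by simp
    then obtain j where j: "j < length ?Ls" "?Ls ! j = i" by (metis in_set_conv_nth)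
    have "j \<in> p ` {..<?k}" using permutes_image[OF p'] j kl by auto
    then show "i \<in> e ` {..<?k}" using j unfolding e_def by auto
  qed
  show ?thesis using that[OF inj _ match cover] inset by auto
qed

lemma column_sign_vector:
  fixes v lam :: "int list"
  assumes inj: "inj_on e {..<length lam}" and sub: "e ` {..<length lam} \<subseteq> {..<n}"
    and match: "\<forall>b<length lam. v ! (e b) \<noteq> 0 \<and> lam ! b = \<bar>v ! (e b)\<bar>"
    and cover: "\<forall>i<n. v ! i \<noteq> 0 \<longrightarrow> i \<in> e ` {..<length lam}"
    and c: "\<forall>i<n. c i \<in> {-1, 1}" and z: "(\<Sum>i<n. v ! i * c i) = 0"
  shows "map (\<lambda>b. sgn (v ! (e b)) * c (e b)) [0..<length lam] \<in> bperp lam"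
proof -
  let ?k = "length lam"
  let ?x = "map (\<lambda>b. sgn (v ! (e b)) * c (e b)) [0..<?k]"
  have "set ?x \<subseteq> {-1, 1}"
  proof
    fix y assume "y \<in> set ?x"
    then obtain b where b: "b < ?k" "y = sgn (v ! (e b)) * c (e b)" by auto
    have "c (e b) \<in> {-1,1}" using c sub b by auto
    moreover have "sgn (v ! (e b)) \<in> {-1,1}" using match b by (auto simp: sgn_if)
    ultimately show "y \<in> {-1, 1}" using b by auto
  qed
  moreover have "dotl lam ?x = 0"
  proof -
    have "dotl lam ?x = (\<Sum>b<?k. v ! (e b) * c (e b))"
      unfolding dotl_def
    proof (rule sum.cong[OF refl])
      fix b assume "b \<in> {..<?k}"
      then have b: "b < ?k" by simp
      then have "lam ! b * sgn (v ! (e b)) = v ! (e b)" using match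
        by (metis abs_mult_sgn mult.commute)
      then show "lam ! b * ?x ! b = v ! (e b) * c (e b)" using b by (simp add: mult.assoc[symmetric])
    qed
    also have "\<dots> = (\<Sum>i\<in>e ` {..<?k}. v ! i * c i)"
      by (rule sum.reindex[OF inj, unfolded comp_def, symmetric])
    also have "\<dots> = (\<Sum>i<n. v ! i * c i)"
      by (rule sum.mono_neutral_left) (use sub cover in auto)
    finally show ?thesis using z by simp
  qed
  ultimately show ?thesis unfolding bperp_def by simp
qed

text \<open>In particular a partition realized by an n x n +-1 matrix (n > 0) has nonempty
  Bernoulli complement: use the first column.\<close>
lemma realized_bperp_nonempty:
  fixes M :: "int mat"
  assumes Mpm: "\<forall>i<n. \<forall>j<n. M $$ (i, j) \<in> {-1, 1}" and r: "realized M n lam" and n: "0 < n"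
  shows "bperp lam \<noteq> {}"
proof -
  obtain v where nv: "nullv M n v" and mv: "mset (filter (\<lambda>x. x \<noteq> 0) (map abs v)) = mset lam"
    using r unfolding realized_def by blast
  have lv: "length v = n" using nv unfolding nullv_def by simp
  obtain e where emb: "inj_on e {..<length lam}" "e ` {..<length lam} \<subseteq> {..<n}"
    "\<forall>b<length lam. v ! (e b) \<noteq> 0 \<and> lam ! b = \<bar>v ! (e b)\<bar>"
    "\<forall>i<n. v ! i \<noteq> 0 \<longrightarrow> i \<in> e ` {..<length lam}"
    using support_embedding[OF lv mv] by blast
  have "\<forall>i<n. M $$ (i, 0) \<in> {-1, 1}" using Mpm n by auto
  moreover have "(\<Sum>i<n. v ! i * M $$ (i, 0)) = 0" using nv n unfolding nullv_def by auto
  ultimately show ?thesis using column_sign_vector[OF emb] by auto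
qed

section \<open>Realizability is inherited along reductions\<close>

lemma nths_as_map: "nths x I = map ((!) x) (filter (\<lambda>i. i \<in> I) [0..<length x])"
proof -
  have nths_upt: "nths [0..<m] I = filter (\<lambda>i. i \<in> I) [0..<m]" for m
    by (induct m) (auto simp: nths_append)
  have "nths x I = nths (map ((!) x) [0..<length x]) I" by (simp add: map_nth)
  also have "\<dots> = map ((!) x) (nths [0..<length x] I)" by (rule nths_map)
  finally show ?thesis by (simp add: nths_upt)
qed

definition embed_at :: "nat \<Rightarrow> nat \<Rightarrow> (nat \<Rightarrow> nat) \<Rightarrow> (nat \<Rightarrow> int) \<Rightarrow> int list" where
  "embed_at n m g y = map (\<lambda>j. if j \<in> g ` {..<m} then y (inv_into {..<m} g j) else 0) [0..<n]"

lemma embed_at_sum: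
  assumes inj: "inj_on g {..<m}" and sub: "g ` {..<m} \<subseteq> {..<n}"
  shows "(\<Sum>j<n. embed_at n m g y ! j * c j) = (\<Sum>t<m. y t * c (g t))"
proof -
  have "(\<Sum>j<n. embed_at n m g y ! j * c j) = (\<Sum>j\<in>g ` {..<m}. embed_at n m g y ! j * c j)"
    by (rule sum.mono_neutral_right) (use sub in \<open>auto simp: embed_at_def\<close>)
  also have "\<dots> = (\<Sum>t<m. embed_at n m g y ! (g t) * c (g t))"
    by (rule sum.reindex[OF inj, unfolded comp_def])
  also have "\<dots> = (\<Sum>t<m. y t * c (g t))"
    using sub inv_into_f_f[OF inj] by (intro sum.cong) (auto simp: embed_at_def)
  finally show ?thesis .
qed

lemma embed_at_mset:
  assumes inj: "inj_on g {..<m}" and sub: "g ` {..<m} \<subseteq> {..<n}" and nz: "\<forall>t<m. y t \<noteq> 0"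
  shows "mset (filter (\<lambda>x. x \<noteq> 0) (map abs (embed_at n m g y))) = mset (map (\<lambda>t. \<bar>y t\<bar>) [0..<m])"
proof -
  let ?h = "\<lambda>j. \<bar>embed_at n m g y ! j\<bar>"
  have hv: "map abs (embed_at n m g y) = map ?h [0..<n]"
    by (rule nth_equalityI) (auto simp: embed_at_def)
  have hg: "?h (g t) = \<bar>y t\<bar>" if "t < m" for t
    using that sub inv_into_f_f[OF inj] by (auto simp: embed_at_def)
  have supp: "{j \<in> {..<n}. ?h j \<noteq> 0} = g ` {..<m}"
  proof
    show "{j \<in> {..<n}. ?h j \<noteq> 0} \<subseteq> g ` {..<m}" by (auto simp: embed_at_def split: if_splits)
    show "g ` {..<m} \<subseteq> {j \<in> {..<n}. ?h j \<noteq> 0}"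
    proof
      fix j assume "j \<in> g ` {..<m}"
      then obtain t where "t < m" "j = g t" by auto
      then show "j \<in> {j \<in> {..<n}. ?h j \<noteq> 0}" using hg[of t] nz sub by auto
    qed
  qed
  have "mset (filter (\<lambda>x. x \<noteq> 0) (map abs (embed_at n m g y)))
      = image_mset ?h (filter_mset (\<lambda>j. ?h j \<noteq> 0) (mset_set {..<n}))"
    unfolding hv by (simp add: filter_map comp_def atLeast0LessThan)
  also have "\<dots> = image_mset ?h (image_mset g (mset_set {..<m}))"
    using supp image_mset_mset_set[OF inj] by simp
  also have "\<dots> = image_mset (\<lambda>t. \<bar>y t\<bar>) (mset_set {..<m})"
    by (simp add: multiset.map_comp comp_def) (rule image_mset_cong, simp add: hg)
  also have "\<dots> = mset (map (\<lambda>t. \<bar>y t\<bar>) [0..<m])" by (simp add: atLeast0LessThan)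
  finally show ?thesis .
qed

lemma realized_embed_at:
  assumes inj: "inj_on g {..<m}" and sub: "g ` {..<m} \<subseteq> {..<n}" and nz: "\<forall>t<m. y t \<noteq> 0"
    and column: "\<And>j. j < n \<Longrightarrow> (\<Sum>t<m. y t * M $$ (g t, j)) = 0"
    and abs_y: "mset (map (\<lambda>t. \<bar>y t\<bar>) [0..<m]) = mset lam"
  shows "realized M n lam"
proof -
  have "length (embed_at n m g y) = n" by (simp add: embed_at_def)
  then have "nullv M n (embed_at n m g y)"
    unfolding nullv_def using embed_at_sum[OF inj sub] column by simp
  moreover have "mset (filter (\<lambda>x. x \<noteq> 0) (map abs (embed_at n m g y))) = mset lam"
    using embed_at_mset[OF inj sub nz] abs_y by simp
  ultimately show ?thesis unfolding realized_def by blast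
qed

lemma Vset_nonzero:
  assumes w: "w \<in> Vset lam" and lam: "is_partition lam" and t: "t < length w"
  shows "w ! t \<noteq> 0"
proof -
  have pos: "\<forall>x\<in>set lam. x \<ge> 1" using lam unfolding is_partition_def by blast
  have "\<bar>w ! t\<bar> \<in> set (map abs w)" using t by simp
  then have "\<bar>w ! t\<bar> \<in> set lam" using Vset_mset[OF w pos] by (metis set_mset_mset)
  then show ?thesis using pos by fastforce
qed

text \<open>Let v realize lam, matched to the parts of lam by e, and
  let the reduction lam to lam' be given by the coordinates L (from I) and w in Vset lam'.
  Then v' with entry w ! t * sgn (v ! e (L ! t)) at position e (L ! t) is again a null
  vector: against each column c of M it evaluates to the dot product of w with the
  projection of the column's sign vector, which lies in the complement of lam.\<close>
lemma realized_reduces: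
  fixes M :: "int mat"
  assumes Mpm: "\<forall>i<n. \<forall>j<n. M $$ (i, j) \<in> {-1, 1}"
    and r: "realized M n lam" and lam': "is_partition lam'" and red: "reduces lam lam'"
  shows "realized M n lam'"
proof -
  let ?k = "length lam" and ?k' = "length lam'"
  obtain v where nv: "nullv M n v" and mv: "mset (filter (\<lambda>x. x \<noteq> 0) (map abs v)) = mset lam"
    using r unfolding realized_def by blast
  have lv: "length v = n" using nv unfolding nullv_def by simp
  obtain e where inj: "inj_on e {..<?k}" and sub: "e ` {..<?k} \<subseteq> {..<n}"
    and match: "\<forall>b<?k. v ! (e b) \<noteq> 0 \<and> lam ! b = \<bar>v ! (e b)\<bar>"
    and cover: "\<forall>i<n. v ! i \<noteq> 0 \<longrightarrow> i \<in> e ` {..<?k}"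
    using support_embedding[OF lv mv] by blast
  obtain I w where I: "I \<subseteq> {..<?k}" and cI: "card I = ?k'" and w: "w \<in> Vset lam'"
    and img: "(\<lambda>x. nths x I) ` bperp lam \<subseteq> bperp w"
    using red unfolding reduces_def by blast
  define L where "L = filter (\<lambda>i. i \<in> I) [0..<?k]"
  have dL: "distinct L" and sL: "set L = I" using I unfolding L_def by auto
  have lL: "length L = ?k'" using distinct_card[OF dL] sL cI by simp
  have lw: "length w = ?k'" using w unfolding Vset_def by simp
  have Lk: "L ! t < ?k" if "t < ?k'" for t using sL I lL that nth_mem by fastforce
  define g where "g t = e (L ! t)" for t
  have ginj: "inj_on g {..<?k'}"
  proof (rule inj_onI)
    fix a b assume a: "a \<in> {..<?k'}" and b: "b \<in> {..<?k'}" and "g a = g b"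
    then have "L ! a = L ! b" using inj Lk unfolding g_def inj_on_def by auto
    then show "a = b" using dL a b lL by (simp add: nth_eq_iff_index_eq)
  qed
  have gsub: "g ` {..<?k'} \<subseteq> {..<n}" using sub Lk unfolding g_def by auto
  have vg: "v ! g t \<noteq> 0" if "t < ?k'" for t using match Lk[OF that] unfolding g_def by auto
  define y where "y t = w ! t * sgn (v ! g t)" for t
  have column: "(\<Sum>t<?k'. y t * M $$ (g t, j)) = 0" if j: "j < n" for j
  proof -
    let ?x = "map (\<lambda>b. sgn (v ! (e b)) * M $$ (e b, j)) [0..<?k]"
    have "(\<Sum>i<n. v ! i * M $$ (i, j)) = 0" using nv j unfolding nullv_def by auto
    moreover have "\<forall>i<n. M $$ (i, j) \<in> {-1, 1}" using Mpm j by blast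
    ultimately have "?x \<in> bperp lam"
      using column_sign_vector[OF inj sub match cover, of "\<lambda>i. M $$ (i, j)"] by blast
    then have "map ((!) ?x) L \<in> bperp w" using img nths_as_map[of ?x I] unfolding L_def by force
    then have "dotl w (map ((!) ?x) L) = 0" unfolding bperp_def by simp
    moreover have "dotl w (map ((!) ?x) L) = (\<Sum>t<?k'. y t * M $$ (g t, j))"
      unfolding dotl_def lw using Lk lL by (intro sum.cong) (auto simp: y_def g_def mult.assoc)
    ultimately show ?thesis by simp
  qed
  have "\<forall>t<?k'. y t \<noteq> 0"
    using Vset_nonzero[OF w lam'] lw vg unfolding y_def by (simp add: sgn_0_0)
  moreover have "map (\<lambda>t. \<bar>y t\<bar>) [0..<?k'] = map abs w"
    using vg lw by (intro nth_equalityI) (auto simp: y_def abs_mult abs_sgn_eq)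
  then have "mset (map (\<lambda>t. \<bar>y t\<bar>) [0..<?k']) = mset lam'"
    using Vset_mset[OF w] lam' unfolding is_partition_def by simp
  ultimately show ?thesis using realized_embed_at[OF ginj gsub] column by blast
qed

section \<open>From a realized partition to a vector of V_lam^(n)\<close>

lemma filter_nonzero_abs: "filter (\<lambda>x. x \<noteq> 0) (map abs v) = map abs (filter (\<lambda>x. x \<noteq> 0) (v::int list))"
  by (induct v) auto

lemma filter_nonzero_uminus:
  "filter (\<lambda>x. x \<noteq> 0) (map uminus v) = map uminus (filter (\<lambda>x. x \<noteq> 0) (v::int list))"
  by (induct v) auto

text \<open>A null vector realizing lam, multiplied by -1 if its first nonzero entry is negative,
  lies in V_lam^(n).\<close>
lemma realized_Vsetn:
  assumes r: "realized M n lam" and lp: "is_partition lam"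
  shows "\<exists>v\<in>Vsetn n lam. nullv M n v"
proof -
  obtain v where nv: "nullv M n v" and mv: "mset (filter (\<lambda>x. x \<noteq> 0) (map abs v)) = mset lam"
    using r unfolding realized_def by blast
  let ?u = "filter (\<lambda>x. x \<noteq> 0) v"
  have pos: "\<forall>x\<in>set lam. x \<ge> 1" and lne: "lam \<noteq> []" using lp unfolding is_partition_def by auto
  have mu: "mset (map abs ?u) = mset lam" using mv by (simp only: filter_nonzero_abs)
  have lu: "length ?u = length lam" using mset_eq_length[OF mu] by simp
  have une: "?u \<noteq> []" using lu lne by auto
  have hnz: "hd ?u \<noteq> 0" using hd_in_set[OF une] by auto
  have lv: "length v = n" using nv unfolding nullv_def by simp
  consider "hd ?u > 0" | "hd (map uminus ?u) > 0" using hnz une by (cases "hd ?u > 0") (auto simp: hd_map)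
  then show ?thesis
  proof cases
    case 1
    then have "?u \<in> Vset lam" using Vset_of_mset[OF mu pos une] by simp
    then show ?thesis using nv lv lu unfolding Vsetn_def by auto
  next
    case 2
    let ?w = "map uminus v"
    have "mset (map abs (map uminus ?u)) = mset lam" using mu by (simp add: comp_def)
    then have "map uminus ?u \<in> Vset lam" by (rule Vset_of_mset[OF _ pos]) (use une 2 in auto)
    then have "?w \<in> Vsetn n lam"
      unfolding Vsetn_def mem_Collect_eq filter_nonzero_uminus using lv lu by simp
    moreover have "nullv M n ?w" using nv unfolding nullv_def by (auto simp: sum_negf)
    ultimately show ?thesis by blast
  qed
qed

theorem mainTheorem2:
  fixes M :: "int mat" and n :: nat
  assumes "M \<in> carrier_mat n n"
    and "\<forall>i<n. \<forall>j<n. M $$ (i, j) \<in> {-1, 1}"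
    and "det M = 0"
  shows "\<exists>lam v. novel lam \<and> length lam \<le> n \<and> v \<in> Vsetn n lam \<and>
           transpose_mat M *\<^sub>v vec_of_list v = 0\<^sub>v n"
proof -
  obtain v0 i where v0: "nullv M n v0" and i: "i < n" "v0 ! i \<noteq> 0"
    using null_vector_exists[OF assms(1,3)] .
  define R where "R = {lam. is_partition lam \<and> length lam \<le> n \<and> realized M n lam}"
  have part: "\<forall>lam\<in>R. is_partition lam" unfolding R_def by blast
  have closed: "reduction_closed R"
    using realized_reduces[OF assms(2)] unfolding reduction_closed_def R_def reduces_def by auto
  obtain lam0 where "lam0 \<in> R" using realized_of_null[OF v0 i] unfolding R_def by blast
  then obtain lam where opt: "optimal R lam" using optimal_exists part by blast
  then have lam: "is_partition lam" "length lam \<le> n" "realized M n lam"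
    unfolding optimal_def R_def by auto
  have "bperp lam \<noteq> {}" using realized_bperp_nonempty[OF assms(2) lam(3)] i by simp
  then have "novel lam" using optimal_novel[OF closed part opt] by blast
  moreover obtain v where "v \<in> Vsetn n lam" "nullv M n v" using realized_Vsetn[OF lam(3,1)] by blast
  ultimately show ?thesis using nullv_iff[OF assms(1)] lam(2) unfolding Vsetn_def by blast
qed

end
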